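(* Let $N,M$ be positive integers with $M>N$ and $N$ even, $t$ a complex parameter, $w(x)=e^{-\frac{M}{2}x}x^{\frac{M-N-1}{2}}(t-x)^{-\frac12}$. Every polynomial $P$ can be written uniquely as $P(x)=\frac{d}{dx}\big(q(x)x(t-x)w(x)\big)w^{-1}(x)+R(x)$ with $q$ a polynomial and $\deg R\le1$; let $f$ be the linear map $P\mapsto R$. Let $\pi_{N,1}$ and $\pi_{N+1,1}$ be monic skew orthogonal polynomials of degrees $N$ and $N+1$ with respect to $w$, and let $\varrho_\pi$ be the restriction of $f$ to the span of $\pi_{N+1,1}$ and $\pi_{N,1}$. Then $\varrho_\pi$ is invertible.
   Context: The skew product is $\langle f,g\rangle_1=\int_0^\infty\int_0^\infty\epsilon(x-y)f(x)g(y)w(x)w(y)\,dx\,dy$ with $\epsilon(x)=\frac12\mathrm{sgn}(x)$ (branch cut of $(t-x)^{-1/2}$ on $\arg(t-x)=\pi$; contour deformed near $t$ if $t\in(0,\infty)$). A monic skew orthogonal polynomial $\pi_{j,1}$ of degree $j$ is a monic polynomial of degree $j$ such that, writing $j=2m$ or $2m+1$, $\langle\pi_{j,1},y^i\rangle_1=0$ for $i=0,\ldots,2m-1$. Invertible means a linear bijection onto the space of polynomials of degree at most $1$. *)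

theory Defs
  imports "HOL-Analysis.Analysis" "HOL-Computational_Algebra.Polynomial"
begin

text \<open>Weight w(x) = exp(-M x/2) x^((M-N-1)/2) (t-x)^(-1/2) on x > 0.
  The complex power uses the principal branch of Ln (Arg in (-pi,pi]),
  i.e. the branch cut of (t-x)^(-1/2) lies on arg(t-x) = pi.\<close>
definition weight :: "nat \<Rightarrow> nat \<Rightarrow> complex \<Rightarrow> real \<Rightarrow> complex" where
  "weight N M t x =
     complex_of_real (exp (- (real M / 2) * x) * x powr ((real M - real N - 1) / 2))
     * (t - complex_of_real x) powr (- (1/2))"

definition eps :: "real \<Rightarrow> real" where
  "eps x = sgn x / 2"

definition skew1 :: "nat \<Rightarrow> nat \<Rightarrow> complex \<Rightarrow> complex poly \<Rightarrow> complex poly \<Rightarrow> complex" where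
  "skew1 N M t f g =
     (LINT x:{0<..}|lborel. LINT y:{0<..}|lborel.
        complex_of_real (eps (x - y)) * poly f (complex_of_real x) * poly g (complex_of_real y)
        * weight N M t x * weight N M t y)"

text \<open>Monic skew orthogonal polynomial of degree j (j = 2m or 2m+1):
  <pi, y^i>_1 = 0 for i = 0..2m-1.\<close>
definition skew_orth :: "nat \<Rightarrow> nat \<Rightarrow> complex \<Rightarrow> nat \<Rightarrow> complex poly \<Rightarrow> bool" where
  "skew_orth N M t j p \<longleftrightarrow>
     degree p = j \<and> lead_coeff p = 1 \<and>
     (\<forall>i < 2 * (j div 2). skew1 N M t p (monom 1 i) = 0)"

text \<open>The operator q \<mapsto> (d/dx (q(x) x (t-x) w(x))) w(x)^(-1), written out as a
  polynomial using w'/w = -M/2 + ((M-N-1)/2)/x + 1/(2(t-x)):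
  (q x (t-x))' + q (-(M/2) x (t-x) + ((M-N-1)/2) (t-x) + x/2).\<close>
definition Dop :: "nat \<Rightarrow> nat \<Rightarrow> complex \<Rightarrow> complex poly \<Rightarrow> complex poly" where
  "Dop N M t q =
     pderiv (q * [:0, 1:] * [:t, -1:])
     + q * (smult (- (of_nat M / 2)) ([:0, 1:] * [:t, -1:])
            + smult ((of_nat M - of_nat N - 1) / 2) [:t, -1:]
            + smult (1/2) [:0, 1:])"

definition fmap :: "nat \<Rightarrow> nat \<Rightarrow> complex \<Rightarrow> complex poly \<Rightarrow> complex poly" where
  "fmap N M t P = (THE R. degree R \<le> 1 \<and> (\<exists>q. P = Dop N M t q + R))"

end

theory Submission
  imports Defs "HOL-Complex_Analysis.Cauchy_Integral_Theorem"
begin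

(* With sigma = x (t - x), the operator is Dop q = sigma q' + tau q, where tau = sigma' + sigma w'/w is
   quadratic with leading coefficient M/2; so Dop raises degrees by exactly two, f is well defined and
   linear with values of degree <= 1, and on the two-dimensional span of pi_N and pi_(N+1) it is
   bijective as soon as no nonzero combination a pi_(N+1) + b pi_N lies in the range of Dop.

   Since sigma w^2 = x^(M-N) exp (-M x) does not depend on t, integrating (q sigma w)' against the
   potential of g (the inner integral of the skew product) by parts gives
     <Dop q, g>_1 = - integral over (0, oo) of q g x^(M-N) exp (-M x).
   If Dop q = a pi_(N+1) + b pi_N, then deg q < N, and the skew orthogonality of pi_N and pi_(N+1)
   to y^i, i < N, makes the integral of |q|^2 x^(M-N) exp (-M x) vanish; hence q = 0 and a = b = 0. *)

definition pearson_sigma :: "complex \<Rightarrow> complex poly" where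
  "pearson_sigma t = [:0, t, -1:]"

definition pearson_tau :: "nat \<Rightarrow> nat \<Rightarrow> complex \<Rightarrow> complex poly" where
  "pearson_tau N M t =
     pderiv (pearson_sigma t) + smult (- (of_nat M / 2)) (pearson_sigma t)
     + smult ((of_nat M - of_nat N - 1) / 2) [:t, -1:] + smult (1/2) [:0, 1:]"

lemma pearson_sigma_eq: "[:0, 1:] * [:t, -1:] = pearson_sigma t"
  by (simp add: pearson_sigma_def)

lemma Dop_eq_pderiv_sigma:
  "Dop N M t q = pderiv (q * pearson_sigma t)
     + q * (smult (- (of_nat M / 2)) (pearson_sigma t)
            + smult ((of_nat M - of_nat N - 1) / 2) [:t, -1:] + smult (1/2) [:0, 1:])"
  unfolding Dop_def by (simp only: mult.assoc pearson_sigma_eq)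

lemma Dop_eq: "Dop N M t q = pderiv q * pearson_sigma t + q * pearson_tau N M t"
  by (simp add: Dop_eq_pderiv_sigma pearson_tau_def pderiv_mult algebra_simps)

lemma Dop_add: "Dop N M t (p + q) = Dop N M t p + Dop N M t q"
  by (simp add: Dop_eq pderiv_add algebra_simps)

lemma Dop_smult: "Dop N M t (smult c q) = smult c (Dop N M t q)"
  by (simp add: Dop_eq pderiv_smult smult_add_right)

lemma Dop_0 [simp]: "Dop N M t 0 = 0"
  by (simp add: Dop_eq)

lemma Dop_diff: "Dop N M t (p - q) = Dop N M t p - Dop N M t q"
  by (metis Dop_add diff_add_cancel eq_diff_eq)

lemma coeff_pearson_tau_2: "coeff (pearson_tau N M t) 2 = of_nat M / 2"
  by (simp add: pearson_tau_def pearson_sigma_def pderiv_pCons numeral_2_eq_2)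

lemma degree_pearson_tau:
  assumes "M > 0"
  shows "degree (pearson_tau N M t) = 2"
proof (rule antisym)
  show "degree (pearson_tau N M t) \<le> 2"
    by (simp add: pearson_tau_def pearson_sigma_def pderiv_pCons degree_add_le)
  show "2 \<le> degree (pearson_tau N M t)"
    using assms by (intro le_degree) (simp add: coeff_pearson_tau_2)
qed

lemma degree_Dop:
  assumes "M > 0" "q \<noteq> 0"
  shows "degree (Dop N M t q) = degree q + 2"
    and "lead_coeff (Dop N M t q) = of_nat M / 2 * lead_coeff q"
proof -
  have tau: "degree (pearson_tau N M t) = 2" "lead_coeff (pearson_tau N M t) = of_nat M / 2"
    using degree_pearson_tau[OF assms(1)] coeff_pearson_tau_2 by simp_all
  then have "pearson_tau N M t \<noteq> 0"
    by auto
  then have deg_tau: "degree (q * pearson_tau N M t) = degree q + 2"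
    using assms tau by (simp add: degree_mult_eq)
  have "degree (pderiv q * pearson_sigma t) < degree q + 2"
  proof (cases "degree q")
    case 0
    then have "pderiv q = 0"
      by (simp add: pderiv_eq_0_iff)
    then show ?thesis by simp
  next
    case (Suc n)
    have "degree (pderiv q * pearson_sigma t) \<le> degree (pderiv q) + 2"
      using degree_mult_le[of "pderiv q" "pearson_sigma t"] by (simp add: pearson_sigma_def)
    then show ?thesis
      using Suc by (simp add: degree_pderiv)
  qed
  moreover have "lead_coeff (q * pearson_tau N M t) = of_nat M / 2 * lead_coeff q"
    using tau by (simp add: lead_coeff_mult)
  ultimately show "degree (Dop N M t q) = degree q + 2"
    and "lead_coeff (Dop N M t q) = of_nat M / 2 * lead_coeff q"
    using deg_tau by (simp_all add: Dop_eq degree_add_eq_right coeff_eq_0)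
qed

lemma degree_Dop_le_1_iff:
  assumes "M > 0"
  shows "degree (Dop N M t q) \<le> 1 \<longleftrightarrow> q = 0"
  using degree_Dop(1)[OF assms] by (cases "q = 0") auto

lemma Dop_decomposition:
  assumes "M > 0"
  shows "\<exists>q R. degree R \<le> 1 \<and> P = Dop N M t q + R"
proof (induction "degree P" arbitrary: P rule: less_induct)
  case less
  show ?case
  proof (cases "degree P \<le> 1")
    case True
    then show ?thesis by (intro exI[of _ 0] exI[of _ P]) simp
  next
    case False
    \<comment> \<open>cancel the leading term of P by Dop of a monomial\<close>
    define q0 where "q0 = monom (lead_coeff P / (of_nat M / 2)) (degree P - 2)"
    have "P \<noteq> 0" "q0 \<noteq> 0"
      using False assms by (auto simp: q0_def)
    then have D: "degree (Dop N M t q0) = degree P" "lead_coeff (Dop N M t q0) = lead_coeff P"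
      using False assms degree_Dop[OF assms \<open>q0 \<noteq> 0\<close>, of N t]
      by (simp_all add: q0_def degree_monom_eq)
    have "degree (P - Dop N M t q0) < degree P"
    proof (rule degree_lessI)
      show "P - Dop N M t q0 \<noteq> 0 \<or> degree P > 0"
        using False by simp
      show "\<forall>k\<ge>degree P. coeff (P - Dop N M t q0) k = 0"
        using D by (auto simp: le_less coeff_eq_0)
    qed
    then obtain q R where "degree R \<le> 1" "P - Dop N M t q0 = Dop N M t q + R"
      using less by blast
    then have "degree R \<le> 1 \<and> P = Dop N M t (q0 + q) + R"
      by (simp add: Dop_add algebra_simps)
    then show ?thesis by blast
  qed
qed

lemma Dop_remainder_unique:
  assumes "M > 0" "degree R1 \<le> 1" "degree R2 \<le> 1" "Dop N M t q1 + R1 = Dop N M t q2 + R2"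
  shows "R1 = R2"
proof -
  have "Dop N M t (q1 - q2) = R2 - R1"
    using assms(4) by (simp add: Dop_diff algebra_simps)
  moreover have "degree (R2 - R1) \<le> 1"
    using assms(3,2) by (rule degree_diff_le)
  ultimately have "q1 = q2"
    using degree_Dop_le_1_iff[OF assms(1), of N t "q1 - q2"] by simp
  then show ?thesis
    using assms(4) by simp
qed

lemma fmap_eqI:
  assumes "M > 0" "degree R \<le> 1" "P = Dop N M t q + R"
  shows "fmap N M t P = R"
  unfolding fmap_def
proof (rule the_equality)
  show "degree R \<le> 1 \<and> (\<exists>q. P = Dop N M t q + R)"
    using assms by blast
  fix R' assume "degree R' \<le> 1 \<and> (\<exists>q. P = Dop N M t q + R')"
  then show "R' = R"
    using Dop_remainder_unique[OF assms(1) _ assms(2)] assms(3) by metis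
qed

lemma fmap_decomposition:
  assumes "M > 0"
  shows "\<exists>q. P = Dop N M t q + fmap N M t P" and "degree (fmap N M t P) \<le> 1"
  using Dop_decomposition[OF assms, of P N t] fmap_eqI[OF assms] by metis+

lemma fmap_lincomb:
  assumes "M > 0"
  shows "fmap N M t (smult a P + smult b Q) = smult a (fmap N M t P) + smult b (fmap N M t Q)"
proof -
  obtain p q where p: "P = Dop N M t p + fmap N M t P" and q: "Q = Dop N M t q + fmap N M t Q"
    using fmap_decomposition(1)[OF assms] by metis
  have "smult a P + smult b Q
      = smult a (Dop N M t p + fmap N M t P) + smult b (Dop N M t q + fmap N M t Q)"
    by (simp only: p[symmetric] q[symmetric])
  then have "smult a P + smult b Q
      = Dop N M t (smult a p + smult b q) + (smult a (fmap N M t P) + smult b (fmap N M t Q))"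
    by (simp add: Dop_add Dop_smult smult_add_right algebra_simps)
  moreover have "degree (smult a (fmap N M t P) + smult b (fmap N M t Q)) \<le> 1"
    using fmap_decomposition(2)[OF assms]
    by (intro degree_add_le order.trans[OF degree_smult_le])
  ultimately show ?thesis
    using fmap_eqI[OF assms] by blast
qed

lemma fmap_eq_0_iff:
  assumes "M > 0"
  shows "fmap N M t P = 0 \<longleftrightarrow> (\<exists>q. P = Dop N M t q)"
  using fmap_decomposition(1)[OF assms, of P N t] fmap_eqI[OF assms, of 0 P N t] by auto

lemma poly_eqI_degree_le_1:
  assumes "degree p \<le> 1" "degree q \<le> 1" "coeff p 0 = coeff q 0" "coeff p 1 = coeff q 1"
  shows "p = q"
proof (rule poly_eqI)
  fix n
  show "coeff p n = coeff q n"
  proof (cases "n \<le> 1")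
    case True
    then have "n = 0 \<or> n = 1"
      by auto
    then show ?thesis
      using assms by auto
  next
    case False
    then show ?thesis
      using assms(1,2) by (metis coeff_eq_0 le_less_trans not_le)
  qed
qed

text \<open>The coefficient vector of \<open>h\<close> is a real-linear injective endomorphism of \<open>\<complex>\<^sup>2 = \<real>\<^sup>4\<close>.\<close>

lemma range_degree_le_1_if_inj:
  fixes h :: "complex \<times> complex \<Rightarrow> complex poly"
  assumes add: "\<And>x y. h (x + y) = h x + h y"
    and scale: "\<And>c x. h (c *\<^sub>R x) = smult (of_real c) (h x)"
    and deg: "\<And>x. degree (h x) \<le> 1"
    and "inj h"
  shows "range h = {R. degree R \<le> 1}"
proof -
  define g where "g x = (coeff (h x) 0, coeff (h x) 1)" for x
  have "linear g"
    by (rule linearI) (simp_all add: g_def add scale scaleR_conv_of_real)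
  moreover have "inj g"
  proof (rule injI)
    fix x y
    assume "g x = g y"
    then have "h x = h y"
      using deg by (intro poly_eqI_degree_le_1) (simp_all add: g_def)
    then show "x = y"
      using \<open>inj h\<close> by (simp add: inj_eq)
  qed
  ultimately have "surj g"
    by (intro linear_injective_imp_surjective) auto
  have "R \<in> range h" if "degree R \<le> 1" for R
  proof -
    obtain x where "g x = (coeff R 0, coeff R 1)"
      using \<open>surj g\<close> by (metis surjD)
    then have "h x = R"
      using deg that by (intro poly_eqI_degree_le_1) (auto simp: g_def)
    then show ?thesis
      by blast
  qed
  then show ?thesis
    using deg by auto
qed

lemma bij_betw_span2_degree_le_1:
  fixes L :: "complex poly \<Rightarrow> complex poly"
  assumes lin: "\<And>a b P Q. L (smult a P + smult b Q) = smult a (L P) + smult b (L Q)"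
    and deg: "\<And>P. degree (L P) \<le> 1"
    and indep: "\<And>a b. L (smult a p + smult b q) = 0 \<Longrightarrow> a = 0 \<and> b = 0"
  shows "bij_betw L {smult a p + smult b q | a b. True} {R. degree R \<le> 1}"
proof -
  define \<phi> where "\<phi> = (\<lambda>(a, b). smult a p + smult b q)"
  have add: "(L \<circ> \<phi>) (x + y) = (L \<circ> \<phi>) x + (L \<circ> \<phi>) y" for x y
    using lin[of 1 "\<phi> x" 1 "\<phi> y"] by (cases x, cases y) (simp add: \<phi>_def algebra_simps smult_add_left)
  have scale: "(L \<circ> \<phi>) (c *\<^sub>R x) = smult (of_real c) ((L \<circ> \<phi>) x)" for c x
    using lin[of "of_real c" "\<phi> x" 0 0] by (cases x) (simp add: \<phi>_def scaleR_conv_of_real smult_add_right)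
  have "inj (L \<circ> \<phi>)"
  proof (rule injI)
    fix x y
    assume "(L \<circ> \<phi>) x = (L \<circ> \<phi>) y"
    then have "(L \<circ> \<phi>) (x - y) = 0"
      using add[of "x - y" y] by simp
    then have "x - y = 0"
      using indep by (cases "x - y") (auto simp: \<phi>_def zero_prod_def)
    then show "x = y"
      by simp
  qed
  moreover have "{smult a p + smult b q | a b. True} = range \<phi>"
    by (auto simp: \<phi>_def)
  ultimately show ?thesis
    unfolding bij_betw_def using range_degree_le_1_if_inj[OF add scale _ \<open>inj (L \<circ> \<phi>)\<close>] deg
    by (simp add: inj_on_imageI image_comp)
qed

lemma poly_exp_bound:
  fixes c :: real
  assumes "c > 0"
  shows "\<exists>D>0. \<forall>x\<ge>0. (1 + x) ^ k \<le> D * exp (c * x)"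
proof (cases "k = 0")
  case True
  then show ?thesis
    using assms by (intro exI[of _ 1]) auto
next
  case False
  define L where "L = max 1 (real k / c)"
  have L: "L \<ge> 1" "L * (c / real k) \<ge> 1"
    using False assms by (auto simp: L_def field_simps max_def)
  show ?thesis
  proof (intro exI[of _ "L ^ k"] conjI allI impI)
    show "L ^ k > 0"
      using L by simp
    fix x :: real
    assume x: "x \<ge> 0"
    have "1 + x \<le> L * (1 + c / real k * x)"
      using L mult_right_mono[OF L(2) x] by (simp add: algebra_simps)
    then have "(1 + x) ^ k \<le> (L * (1 + c / real k * x)) ^ k"
      using x by (intro power_mono) auto
    also have "\<dots> \<le> L ^ k * exp (c / real k * x) ^ k"
      unfolding power_mult_distrib
      using L x assms by (intro mult_left_mono power_mono) (auto simp: exp_ge_add_one_self)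
    also have "exp (c / real k * x) ^ k = exp (c * x)"
      using False by (simp add: exp_of_nat_mult[symmetric])
    finally show "(1 + x) ^ k \<le> L ^ k * exp (c * x)" .
  qed
qed

lemma poly_exp_decay:
  fixes c :: real
  assumes "c > 0"
  shows "\<exists>D>0. \<forall>x\<ge>0. (1 + x) ^ k * exp (- c * x) \<le> D * exp (- (c / 2) * x)"
proof -
  obtain D where D: "D > 0" "\<And>x. x \<ge> 0 \<Longrightarrow> (1 + x) ^ k \<le> D * exp (c / 2 * x)"
    using poly_exp_bound[of "c / 2" k] assms by auto
  have "(1 + x) ^ k * exp (- c * x) \<le> D * exp (- (c / 2) * x)" if "x \<ge> 0" for x
  proof -
    have "(1 + x) ^ k * exp (- c * x) \<le> D * exp (c / 2 * x) * exp (- c * x)"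
      using D(2)[OF that] by (rule mult_right_mono) simp
    also have "\<dots> = D * exp (- (c / 2) * x)"
      by (simp add: mult.assoc exp_add[symmetric])
    finally show ?thesis .
  qed
  then show ?thesis
    using D(1) by blast
qed

lemma norm_poly_le:
  fixes p :: "complex poly" and x :: real
  assumes "x \<ge> 0"
  shows "norm (poly p (of_real x)) \<le> (\<Sum>i\<le>degree p. norm (coeff p i)) * (1 + x) ^ degree p"
proof -
  have "norm (poly p (of_real x)) \<le> (\<Sum>i\<le>degree p. norm (coeff p i * of_real x ^ i))"
    unfolding poly_altdef by (rule norm_sum)
  also have "\<dots> \<le> (\<Sum>i\<le>degree p. norm (coeff p i) * (1 + x) ^ degree p)"
  proof (rule sum_mono)
    fix i
    assume "i \<in> {..degree p}"
    then have "x ^ i \<le> (1 + x) ^ i" "(1 + x) ^ i \<le> (1 + x) ^ degree p"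
      using assms by (auto intro: power_mono power_increasing)
    then have "x ^ i \<le> (1 + x) ^ degree p"
      by linarith
    then show "norm (coeff p i * of_real x ^ i) \<le> norm (coeff p i) * (1 + x) ^ degree p"
      using assms by (simp add: norm_mult norm_power mult_left_mono)
  qed
  finally show ?thesis
    by (simp add: sum_distrib_right)
qed

lemma set_integrable_lborel_nonneg:
  fixes g :: "real \<Rightarrow> real"
  assumes "g integrable_on S" "\<And>x. x \<in> S \<Longrightarrow> 0 \<le> g x" "S \<in> sets borel" "g \<in> borel_measurable borel"
  shows "set_integrable lborel S g"
proof -
  have "integrable lebesgue (\<lambda>x. indicator S x *\<^sub>R g x)"
    using nonnegative_absolutely_integrable_1[OF assms(1,2)] by (simp add: set_integrable_def)
  moreover have "(\<lambda>x. indicator S x *\<^sub>R g x) \<in> borel_measurable lborel"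
    using assms(3,4) by measurable
  ultimately show ?thesis
    unfolding set_integrable_def using integrable_completion by blast
qed

lemma set_integrable_exp_neg:
  fixes c :: real
  assumes "c > 0"
  shows "set_integrable lborel {0<..} (\<lambda>x. exp (- c * x))"
proof -
  have "set_integrable lborel {0..} (\<lambda>x. exp (- c * x))"
    using integrable_on_exp_minus_to_infinity[of c 0] assms
    by (intro set_integrable_lborel_nonneg) auto
  then show ?thesis
    by (rule set_integrable_subset) auto
qed

text \<open>Real \<open>powr\<close> ignores the sign of its base, so \<open>(x - r) powr (-1/2)\<close> is \<open>|x - r|\<^sup>-\<^sup>1\<^sup>/\<^sup>2\<close>.\<close>

lemma abs_powr_real: "\<bar>x\<bar> powr a = x powr a" for x a :: real
  by (simp add: abs_if uminus_powr_eq)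

lemma set_integrable_powr_neg_half_around:
  "set_integrable lborel {r - 1..r + 1} (\<lambda>x::real. (x - r) powr (-1/2))"
proof (rule set_integrable_lborel_nonneg)
  have right: "(\<lambda>x::real. x powr (-1/2)) integrable_on {0..1}"
    by (rule integrable_on_powr_from_0) auto
  then have "(\<lambda>x::real. (- x) powr (-1/2)) integrable_on {-1..-0}"
    using Henstock_Kurzweil_Integration.integrable_reflect_real[THEN iffD2, OF right] by simp
  then have "(\<lambda>x::real. x powr (-1/2)) integrable_on {-1..0}"
    by (simp add: uminus_powr_eq)
  then have "(\<lambda>x::real. x powr (-1/2)) integrable_on {-1..1}"
    using right by (rule Henstock_Kurzweil_Integration.integrable_combine[rotated 2]) auto
  then obtain I where "((\<lambda>x::real. x powr (-1/2)) has_integral I) (cbox (-1) 1)"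
    by (auto simp: integrable_on_def)
  from has_integral_affinity'[OF this, of 1 "- r"]
  show "(\<lambda>x. (x - r) powr (-1/2)) integrable_on {r - 1..r + 1}"
    by (auto simp: integrable_on_def algebra_simps)
qed auto

lemma set_integrable_poly_exp:
  fixes c :: real
  assumes "c > 0"
  shows "set_integrable lborel {0<..} (\<lambda>x. (1 + x) ^ k * exp (- c * x))"
proof -
  obtain D where D: "\<And>x. x \<ge> 0 \<Longrightarrow> (1 + x) ^ k * exp (- c * x) \<le> D * exp (- (c / 2) * x)"
    using poly_exp_decay[OF assms, of k] by auto
  have "set_integrable lborel {0<..} (\<lambda>x. D * exp (- (c / 2) * x))"
    using assms by (intro set_integrable_mult_right set_integrable_exp_neg) auto
  then show ?thesis
  proof (rule set_integrable_bound)
    show "set_borel_measurable lborel {0<..} (\<lambda>x. (1 + x) ^ k * exp (- c * x))"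
      unfolding set_borel_measurable_def by measurable
    show "AE x in lborel. x \<in> {0<..} \<longrightarrow> norm ((1 + x) ^ k * exp (- c * x)) \<le> norm (D * exp (- (c / 2) * x))"
    proof (intro AE_I2 impI)
      fix x :: real
      assume "x \<in> {0<..}"
      then have "(1 + x) ^ k * exp (- c * x) \<le> D * exp (- (c / 2) * x)"
        using D by simp
      then show "norm ((1 + x) ^ k * exp (- c * x)) \<le> norm (D * exp (- (c / 2) * x))"
        using \<open>x \<in> {0<..}\<close> by simp
    qed
  qed
qed

lemma powr_neg_half_le_indicator:
  fixes x r :: real
  shows "1 + (x - r) powr (-1/2) \<le> 2 + indicator {r - 1..r + 1} x * (x - r) powr (-1/2)"
proof (cases "x \<in> {r - 1..r + 1}")
  case False
  then have "1 \<le> \<bar>x - r\<bar>"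
    by auto
  then have "\<bar>x - r\<bar> powr (-1/2) \<le> 1 powr (-1/2)"
    by (intro powr_mono2') auto
  then show ?thesis
    using False by (simp add: abs_powr_real)
qed simp

lemma set_integrable_exp_singular:
  fixes c r :: real
  assumes "c > 0"
  shows "set_integrable lborel {0<..} (\<lambda>x. (1 + x) ^ k * exp (- c * x) * (1 + (x - r) powr (-1/2)))"
proof -
  obtain D where D: "D > 0" "\<And>x. x \<ge> 0 \<Longrightarrow> (1 + x) ^ k * exp (- c * x) \<le> D * exp (- (c / 2) * x)"
    using poly_exp_decay[OF assms, of k] by auto
  define S where "S = {r - 1..r + 1}"
  define g where "g x = 2 * D * exp (- (c / 2) * x) + D * (indicator S x * (x - r) powr (-1/2))" for x
  have "set_integrable lborel {0<..} (\<lambda>x. indicator S x * (x - r) powr (-1/2))"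
    using integrable_mult_indicator[of "{0<..}" lborel, OF _ set_integrable_powr_neg_half_around[of r,
          unfolded set_integrable_def]]
    by (simp add: set_integrable_def S_def)
  then have g: "set_integrable lborel {0<..} g"
    unfolding g_def using set_integrable_exp_neg[of "c / 2"] assms
    by (intro set_integral_add(1) set_integrable_mult_right) auto
  show ?thesis
  proof (rule set_integrable_bound[OF g])
    show "set_borel_measurable lborel {0<..} (\<lambda>x. (1 + x) ^ k * exp (- c * x) * (1 + (x - r) powr (-1/2)))"
      unfolding set_borel_measurable_def by measurable
    have "norm ((1 + x) ^ k * exp (- c * x) * (1 + (x - r) powr (-1/2))) \<le> norm (g x)" if "x > 0" for x
    proof -
      define e where "e = (1 + x) ^ k * exp (- c * x)"
      have "D * exp (- (c / 2) * x) \<le> D"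
        using that assms D(1) by simp
      then have e: "0 \<le> e" "e \<le> D * exp (- (c / 2) * x)" "e \<le> D"
        using that D(2)[of x] by (auto simp: e_def)
      have "norm (e * (1 + (x - r) powr (-1/2))) \<le> e * (2 + indicator S x * (x - r) powr (-1/2))"
        using e(1) powr_neg_half_le_indicator[of x r] by (simp add: S_def mult_left_mono)
      also have "\<dots> \<le> g x"
        using e by (simp add: g_def algebra_simps add_mono mult_right_mono)
      finally show ?thesis
        by (simp add: e_def)
    qed
    then show "AE x in lborel. x \<in> {0<..} \<longrightarrow>
        norm ((1 + x) ^ k * exp (- c * x) * (1 + (x - r) powr (-1/2))) \<le> norm (g x)"
      by auto
  qed
qed

lemma norm_weight:
  assumes "x \<ge> 0"
  shows "norm (weight N M t x)
    = exp (- (real M / 2) * x) * x powr ((real M - real N - 1) / 2) * norm (t - of_real x) powr (-1/2)"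
  using assms by (simp add: weight_def norm_mult norm_powr_real_powr')

lemma norm_weight_le:
  assumes "M > N" "x > 0" "x \<noteq> Re t"
  shows "norm (weight N M t x) \<le> (1 + x) ^ (M - N) * exp (- (real M / 2) * x) * (1 + (x - Re t) powr (-1/2))"
proof -
  have "x powr ((real M - real N - 1) / 2) \<le> (1 + x) powr ((real M - real N - 1) / 2)"
    using assms by (intro powr_mono2) auto
  also have "\<dots> \<le> (1 + x) powr real (M - N)"
    using assms by (intro powr_mono) auto
  also have "\<dots> = (1 + x) ^ (M - N)"
    using assms by (intro powr_realpow) auto
  finally have x_le: "x powr ((real M - real N - 1) / 2) \<le> (1 + x) ^ (M - N)" .
  have "\<bar>x - Re t\<bar> \<le> norm (t - of_real x)"
    using abs_Re_le_cmod[of "t - of_real x"] by simp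
  then have "norm (t - of_real x) powr (-1/2) \<le> \<bar>x - Re t\<bar> powr (-1/2)"
    using assms by (intro powr_mono2') auto
  then have t_le: "norm (t - of_real x) powr (-1/2) \<le> 1 + (x - Re t) powr (-1/2)"
    by (simp add: abs_powr_real)
  have "x powr ((real M - real N - 1) / 2) * norm (t - of_real x) powr (-1/2)
      \<le> (1 + x) ^ (M - N) * (1 + (x - Re t) powr (-1/2))"
    by (rule mult_mono[OF x_le t_le]) (use assms in auto)
  from mult_left_mono[OF this, of "exp (- (real M / 2) * x)"] show ?thesis
    unfolding norm_weight[OF less_imp_le[OF assms(2)]] by (simp add: ac_simps)
qed

text \<open>The product \<open>x (t - x) w(x)\<^sup>2\<close> no longer depends on \<open>t\<close> or on the branch of the square root.\<close>

lemma weight_square: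
  assumes "M > N" "x > 0" "of_real x \<noteq> t"
  shows "(t - of_real x) * (weight N M t x * weight N M t x) = of_real (x ^ (M - N - 1) * exp (- real M * x))"
proof -
  define z where "z = t - of_real x"
  have "z \<noteq> 0"
    using assms by (simp add: z_def)
  have "z powr (- (1/2)) * z powr (- (1/2)) = z powr (-1)"
    by (simp add: powr_add[symmetric])
  also have "\<dots> = inverse z"
    by (simp add: powr_minus)
  finally have z: "z * (z powr (- (1/2)) * z powr (- (1/2))) = 1"
    using \<open>z \<noteq> 0\<close> by simp
  have "(real M - real N - 1) / 2 + (real M - real N - 1) / 2 = real (M - N - 1)"
    using assms(1) by (simp add: of_nat_diff algebra_simps)
  then have "x powr ((real M - real N - 1) / 2) * x powr ((real M - real N - 1) / 2) = x powr real (M - N - 1)"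
    by (simp add: powr_add[symmetric])
  then have x: "x powr ((real M - real N - 1) / 2) * x powr ((real M - real N - 1) / 2) = x ^ (M - N - 1)"
    using assms(2) by (simp add: powr_realpow)
  have "exp (- (real M / 2) * x) * exp (- (real M / 2) * x) = exp (- real M * x)"
    by (simp add: exp_add[symmetric])
  then show ?thesis
    using z x unfolding weight_def z_def[symmetric]
    by (simp add: algebra_simps flip: of_real_mult)
qed

lemma borel_measurable_weight [measurable]: "weight N M t \<in> borel_measurable borel"
proof -
  have "(\<lambda>x::real. (t - of_real x) powr (- (1/2))) \<in> borel_measurable borel"
    unfolding powr_def by measurable
  then show ?thesis
    unfolding weight_def[abs_def] by measurable
qed

lemma cpowr_neg_half_on_cut:
  assumes "r < y"
  shows "(of_real r - of_real y) powr (- (1/2)) = of_real ((y - r) powr (-1/2)) * exp (- (\<i> * of_real pi) / 2)"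
proof -
  have "Ln (of_real y - of_real r) = of_real (ln (y - r))"
    using Ln_of_real[of "y - r"] assms by simp
  then have "Ln (of_real r - of_real y) = \<i> * pi + of_real (ln (y - r))"
    using assms Ln_minus[of "of_real (y - r)"] by simp
  then have "(of_real r - of_real y) powr (- (1/2)) = exp (- (\<i> * of_real pi) / 2 + of_real (- (1/2) * ln (y - r)))"
    using assms by (simp add: powr_def algebra_simps)
  also have "\<dots> = of_real ((y - r) powr (-1/2)) * exp (- (\<i> * of_real pi) / 2)"
    using assms by (simp only: exp_add exp_of_real powr_def) simp
  finally show ?thesis .
qed

lemma has_vector_derivative_cpowr_neg_half:
  fixes x :: real and t :: complex
  assumes "of_real x \<noteq> t"
  shows "((\<lambda>y. (t - of_real y) powr (- (1/2))) has_vector_derivative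
           ((t - of_real x) powr (- (1/2)) / (2 * (t - of_real x)))) (at x)"
proof (cases "t - of_real x \<in> \<real>\<^sub>\<le>\<^sub>0")
  case False
  have "((\<lambda>y. t - of_real y) has_vector_derivative - 1) (at x)"
    by (auto intro!: derivative_eq_intros)
  from field_vector_diff_chain_at[OF this has_field_derivative_powr[OF False, of "- (1/2)"]]
  have deriv: "((\<lambda>y. (t - of_real y) powr (- (1/2))) has_vector_derivative
          - 1 * (- (1/2) * (t - of_real x) powr (- (1/2) - 1))) (at x)"
    by (simp add: o_def)
  have "(t - of_real x) powr (- (1/2) - 1) = (t - of_real x) powr (- (1/2)) / (t - of_real x)"
    by (simp only: powr_diff powr_to_1)
  then have "- 1 * (- (1/2) * (t - of_real x) powr (- (1/2) - 1))
      = (t - of_real x) powr (- (1/2)) / (2 * (t - of_real x))"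
    by simp
  with deriv show ?thesis
    by (simp only:)
next
  case True
  define r where "r = Re t"
  have t: "t = of_real r" and "r < x"
    using True assms by (auto simp: r_def complex_nonpos_Reals_iff complex_eq_iff)
  \<comment> \<open>on the cut \<open>x > Re t\<close> the principal branch is a constant multiple of \<open>(x - Re t)\<^sup>-\<^sup>1\<^sup>/\<^sup>2\<close>\<close>
  define \<kappa> where "\<kappa> = exp (- (\<i> * of_real pi) / 2)"
  have "((\<lambda>y. of_real ((y - r) powr (-1/2)) * \<kappa>) has_vector_derivative
          of_real (- 1/2 * (x - r) powr (-1/2 - 1)) * \<kappa>) (at x)"
    using \<open>r < x\<close>
    by (auto intro!: derivative_eq_intros has_vector_derivative_of_real DERIV_fun_powr[THEN DERIV_cong]
        simp: has_vector_derivative_mult_left)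
  then have "((\<lambda>y. (t - of_real y) powr (- (1/2))) has_vector_derivative
          of_real (- 1/2 * (x - r) powr (-1/2 - 1)) * \<kappa>) (at x)"
    by (rule has_vector_derivative_transform_within_open[where S = "{r<..}"])
       (use \<open>r < x\<close> in \<open>auto simp: t \<kappa>_def cpowr_neg_half_on_cut\<close>)
  moreover have "(x - r) powr (-1/2 - 1) = (x - r) powr (-1/2) / (x - r) powr 1"
    by (simp only: powr_diff)
  then have "- 1/2 * (x - r) powr (-1/2 - 1) = (x - r) powr (-1/2) / (2 * (r - x))"
    using \<open>r < x\<close> by (simp add: field_simps)
  then have "of_real (- 1/2 * (x - r) powr (-1/2 - 1)) * \<kappa>
      = (t - of_real x) powr (- (1/2)) / (2 * (t - of_real x))"
    using \<open>r < x\<close> by (simp add: t \<kappa>_def cpowr_neg_half_on_cut)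
  ultimately show ?thesis
    by simp
qed

lemma has_vector_derivative_weight:
  fixes x :: real
  assumes "x > 0" "of_real x \<noteq> t"
  shows "(weight N M t has_vector_derivative weight N M t x *
           (- (of_nat M / 2) + of_real ((real M - real N - 1) / 2) / of_real x + 1 / (2 * (t - of_real x))))
         (at x)"
proof -
  define a where "a = (real M - real N - 1) / 2"
  define e where "e y = exp (- (real M / 2) * y) * y powr a" for y
  define c where "c y = (t - of_real y) powr (- (1/2))" for y
  have w: "weight N M t = (\<lambda>y. of_real (e y) * c y)"
    by (simp add: fun_eq_iff weight_def e_def c_def a_def)
  have "x powr (a - 1) = x powr a / x"
    using assms by (simp add: powr_diff)
  then have "(e has_real_derivative e x * (- (real M / 2) + a / x)) (at x)"
    unfolding e_def using assms by (auto intro!: derivative_eq_intros simp: field_simps)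
  then have "(weight N M t has_vector_derivative
      of_real (e x) * (c x / (2 * (t - of_real x))) + of_real (e x * (- (real M / 2) + a / x)) * c x) (at x)"
    unfolding w c_def
    by (intro has_vector_derivative_mult has_vector_derivative_of_real
        has_vector_derivative_cpowr_neg_half assms)
  moreover have "t - of_real x \<noteq> 0" "(of_real x :: complex) \<noteq> 0"
    using assms by auto
  ultimately show ?thesis
    unfolding a_def[symmetric] w by (simp add: field_simps)
qed

definition wpoly :: "nat \<Rightarrow> nat \<Rightarrow> complex \<Rightarrow> complex poly \<Rightarrow> real \<Rightarrow> complex" where
  "wpoly N M t p x = poly p (of_real x) * weight N M t x"

lemma borel_measurable_poly_of_real [measurable]:
  "(\<lambda>x::real. poly p (of_real x :: 'a::real_normed_field)) \<in> borel_measurable borel"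
  by (intro borel_measurable_continuous_onI continuous_intros)

lemma borel_measurable_wpoly [measurable]: "wpoly N M t p \<in> borel_measurable borel"
  unfolding wpoly_def[abs_def] by measurable

lemma has_vector_derivative_wpoly_sigma:
  assumes "x > 0" "of_real x \<noteq> t"
  shows "(wpoly N M t (q * pearson_sigma t) has_vector_derivative wpoly N M t (Dop N M t q) x) (at x)"
proof -
  have "((\<lambda>y. poly (q * pearson_sigma t) (of_real y)) has_vector_derivative
      poly (pderiv (q * pearson_sigma t)) (of_real x)) (at x)"
    using field_vector_diff_chain_at[OF has_vector_derivative_of_real[OF DERIV_ident]
        poly_DERIV[of "q * pearson_sigma t" "of_real x"]]
    by (simp add: o_def)
  from has_vector_derivative_mult[OF this has_vector_derivative_weight[OF assms]]
  have deriv: "(wpoly N M t (q * pearson_sigma t) has_vector_derivative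
      poly (q * pearson_sigma t) (of_real x) * (weight N M t x *
        (- (of_nat M / 2) + of_real ((real M - real N - 1) / 2) / of_real x + 1 / (2 * (t - of_real x))))
      + poly (pderiv (q * pearson_sigma t)) (of_real x) * weight N M t x) (at x)"
    by (simp add: wpoly_def[abs_def])
  have "t - of_real x \<noteq> 0" "(of_real x :: complex) \<noteq> 0"
    using assms by auto
  then have "poly (q * pearson_sigma t) (of_real x) * (weight N M t x *
        (- (of_nat M / 2) + of_real ((real M - real N - 1) / 2) / of_real x + 1 / (2 * (t - of_real x))))
      + poly (pderiv (q * pearson_sigma t)) (of_real x) * weight N M t x = wpoly N M t (Dop N M t q) x"
    unfolding wpoly_def Dop_eq_pderiv_sigma by (simp add: pearson_sigma_def field_simps)
  with deriv show ?thesis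
    by (simp only:)
qed

lemma isCont_wpoly:
  assumes "x > 0" "of_real x \<noteq> t"
  shows "isCont (wpoly N M t p) x"
  using has_vector_derivative_continuous[OF has_vector_derivative_weight[OF assms]]
  unfolding wpoly_def[abs_def] by (intro continuous_intros) auto

lemma set_integrable_wpoly:
  assumes "M > N"
  shows "set_integrable lborel {0<..} (wpoly N M t p)"
proof -
  define B where "B = (\<Sum>i\<le>degree p. norm (coeff p i))"
  define g where "g x = B * ((1 + x) ^ (degree p + (M - N)) * exp (- (real M / 2) * x) * (1 + (x - Re t) powr (-1/2)))"
    for x
  have g: "set_integrable lborel {0<..} g"
    unfolding g_def using assms
    by (intro set_integrable_mult_right set_integrable_exp_singular) auto
  show ?thesis
  proof (rule set_integrable_bound[OF g])
    show "set_borel_measurable lborel {0<..} (wpoly N M t p)"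
      unfolding set_borel_measurable_def by measurable
    show "AE x in lborel. x \<in> {0<..} \<longrightarrow> norm (wpoly N M t p x) \<le> norm (g x)"
      using AE_lborel_singleton[of "Re t"]
    proof eventually_elim
      case (elim x)
      show ?case
      proof
        assume "x \<in> {0<..}"
        then have "norm (wpoly N M t p x) \<le> B * (1 + x) ^ degree p
            * ((1 + x) ^ (M - N) * exp (- (real M / 2) * x) * (1 + (x - Re t) powr (-1/2)))"
          unfolding wpoly_def norm_mult B_def
          using norm_poly_le[of x p] norm_weight_le[OF assms _ elim]
          by (intro mult_mono) (auto intro!: mult_nonneg_nonneg sum_nonneg)
        also have "\<dots> \<le> norm (g x)"
          by (simp add: g_def power_add algebra_simps)
        finally show "norm (wpoly N M t p x) \<le> norm (g x)" .
      qed
    qed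
  qed
qed

lemma norm_wpoly_sigma:
  assumes "y \<ge> 0"
  shows "norm (wpoly N M t (q * pearson_sigma t) y) = norm (poly q (of_real y)) * exp (- (real M / 2) * y)
    * y powr (1 + (real M - real N - 1) / 2) * norm (t - of_real y) powr (1/2)"
proof -
  have "wpoly N M t (q * pearson_sigma t) y = poly q (of_real y) * (of_real y * (t - of_real y)) * weight N M t y"
    by (simp add: wpoly_def pearson_sigma_def algebra_simps)
  then have "norm (wpoly N M t (q * pearson_sigma t) y) = norm (poly q (of_real y)) * exp (- (real M / 2) * y)
      * (y * y powr ((real M - real N - 1) / 2)) * (norm (t - of_real y) * norm (t - of_real y) powr (-1/2))"
    using assms by (simp add: norm_mult norm_weight ac_simps)
  also have "norm (t - of_real y) * norm (t - of_real y) powr (-1/2) = norm (t - of_real y) powr (1/2)"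
    using powr_mult_base[of "norm (t - of_real y)" "-1/2"] by simp
  also have "y * y powr ((real M - real N - 1) / 2) = y powr (1 + (real M - real N - 1) / 2)"
    using assms by (rule powr_mult_base)
  finally show ?thesis .
qed

text \<open>At the zeros \<open>0\<close> and \<open>t\<close> of \<open>\<sigma>\<close> the factor \<open>\<sigma>\<close> cancels the singularity of the weight.\<close>

lemma wpoly_sigma_tendsto_0_at_root:
  assumes "M > N" "y0 = 0 \<or> of_real y0 = t" "S \<subseteq> {0..}"
  shows "(wpoly N M t (q * pearson_sigma t) \<longlongrightarrow> 0) (at y0 within S)"
proof (rule Lim_null_comparison)
  define \<beta> where "\<beta> y = norm (poly q (of_real y)) * exp (- (real M / 2) * y)
    * \<bar>y\<bar> powr (1 + (real M - real N - 1) / 2) * norm (t - of_real y) powr (1/2)" for y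
  show "\<forall>\<^sub>F y in at y0 within S. norm (wpoly N M t (q * pearson_sigma t) y) \<le> \<beta> y"
    unfolding eventually_at_filter using assms(3)
    by (intro always_eventually) (auto simp: \<beta>_def norm_wpoly_sigma)
  have "0 < 1 + (real M - real N - 1) / 2"
    using assms by (auto simp: field_simps)
  then have c1: "continuous_on UNIV (\<lambda>y::real. \<bar>y\<bar> powr (1 + (real M - real N - 1) / 2))"
    by (intro continuous_on_powr') (auto intro!: continuous_intros)
  have c2: "continuous_on UNIV (\<lambda>y::real. norm (t - of_real y) powr (1/2))"
    by (intro continuous_on_powr') (auto intro!: continuous_intros)
  have c0: "continuous_on UNIV (\<lambda>y::real. norm (poly q (of_real y)) * exp (- (real M / 2) * y))"
    by (intro continuous_intros)
  have "continuous_on UNIV \<beta>"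
    unfolding \<beta>_def by (intro continuous_on_mult c0 c1 c2)
  then have "(\<beta> \<longlongrightarrow> \<beta> y0) (at y0 within S)"
    by (meson UNIV_I continuous_on_def tendsto_within_subset subset_UNIV)
  moreover have "\<beta> y0 = 0"
    using assms(2) by (auto simp: \<beta>_def)
  ultimately show "(\<beta> \<longlongrightarrow> 0) (at y0 within S)"
    by simp
qed

lemma continuous_on_wpoly_sigma:
  assumes "M > N"
  shows "continuous_on {0..b} (wpoly N M t (q * pearson_sigma t))"
  unfolding continuous_on_eq_continuous_within
proof
  fix y0
  assume y0: "y0 \<in> {0..b}"
  show "continuous (at y0 within {0..b}) (wpoly N M t (q * pearson_sigma t))"
  proof (cases "y0 > 0 \<and> of_real y0 \<noteq> t")
    case True
    then have "y0 > 0" "of_real y0 \<noteq> t"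
      by auto
    from has_vector_derivative_continuous[OF has_vector_derivative_wpoly_sigma[OF this]]
    show ?thesis
      by (rule continuous_at_imp_continuous_within)
  next
    case False
    then have "y0 = 0 \<or> of_real y0 = t"
      using y0 by auto
    moreover from this have "wpoly N M t (q * pearson_sigma t) y0 = 0"
      by (auto simp: wpoly_def pearson_sigma_def)
    ultimately show ?thesis
      using wpoly_sigma_tendsto_0_at_root[OF assms, where S = "{0..b}" and q = q] by (auto simp: continuous_within)
  qed
qed

lemma wpoly_sigma_tendsto_0_at_top:
  assumes "M > N"
  shows "(wpoly N M t (q * pearson_sigma t) \<longlongrightarrow> 0) at_top"
proof -
  define B where "B = (\<Sum>i\<le>degree (q * pearson_sigma t). norm (coeff (q * pearson_sigma t) i))"
  define k where "k = degree (q * pearson_sigma t) + (M - N)"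
  obtain D where D: "\<And>x. x \<ge> 0 \<Longrightarrow> (1 + x) ^ k * exp (- (real M / 2) * x) \<le> D * exp (- (real M / 4) * x)"
    using poly_exp_decay[of "real M / 2" k] assms by auto
  have "((\<lambda>y. 2 * B * D * exp (- (real M / 4) * y)) \<longlongrightarrow> 0) at_top"
    using assms
    by (intro tendsto_mult_right_zero filterlim_compose[OF exp_at_bot]
        filterlim_tendsto_neg_mult_at_bot[OF tendsto_const] filterlim_ident) auto
  moreover have "\<forall>\<^sub>F y in at_top. norm (wpoly N M t (q * pearson_sigma t) y) \<le> 2 * B * D * exp (- (real M / 4) * y)"
    using eventually_ge_at_top[of "\<bar>Re t\<bar> + 1"]
  proof eventually_elim
    case (elim y)
    then have y: "y > 0" "y \<noteq> Re t" "1 \<le> y - Re t"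
      by auto
    then have "(y - Re t) powr (-1/2) \<le> 1 powr (-1/2)"
      by (intro powr_mono2') auto
    then have "(1 + y) ^ (M - N) * exp (- (real M / 2) * y) * (1 + (y - Re t) powr (-1/2))
        \<le> (1 + y) ^ (M - N) * exp (- (real M / 2) * y) * 2"
      using y by (intro mult_left_mono) auto
    with norm_weight_le[OF assms y(1,2)]
    have "norm (weight N M t y) \<le> (1 + y) ^ (M - N) * exp (- (real M / 2) * y) * 2"
      by (rule order.trans)
    then have "norm (wpoly N M t (q * pearson_sigma t) y)
        \<le> B * (1 + y) ^ degree (q * pearson_sigma t) * ((1 + y) ^ (M - N) * exp (- (real M / 2) * y) * 2)"
      unfolding wpoly_def norm_mult B_def
      using norm_poly_le[of y "q * pearson_sigma t"] y
      by (intro mult_mono) (auto intro!: mult_nonneg_nonneg sum_nonneg)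
    also have "\<dots> = 2 * B * ((1 + y) ^ k * exp (- (real M / 2) * y))"
      by (simp add: k_def power_add algebra_simps)
    also have "\<dots> \<le> 2 * B * (D * exp (- (real M / 4) * y))"
      using D[of y] y by (intro mult_left_mono) (auto simp: B_def intro!: sum_nonneg)
    finally show ?case
      by simp
  qed
  ultimately show ?thesis
    by (rule Lim_null_comparison[rotated])
qed

lemma wpoly_sigma_mult_wpoly:
  assumes "M > N" "x > 0" "of_real x \<noteq> t"
  shows "wpoly N M t (q * pearson_sigma t) x * wpoly N M t g x
    = poly (q * g) (of_real x) * of_real (x ^ (M - N) * exp (- real M * x))"
proof -
  have "M - N = Suc (M - N - 1)"
    using assms(1) by simp
  then have x: "x ^ (M - N) = x * x ^ (M - N - 1)"
    by (metis power_Suc)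
  have "wpoly N M t (q * pearson_sigma t) x * wpoly N M t g x
      = poly (q * g) (of_real x) * of_real x * ((t - of_real x) * (weight N M t x * weight N M t x))"
    by (simp add: wpoly_def pearson_sigma_def algebra_simps)
  also have "\<dots> = poly (q * g) (of_real x) * of_real (x * (x ^ (M - N - 1) * exp (- real M * x)))"
    unfolding weight_square[OF assms] by simp
  finally show ?thesis
    unfolding x by (simp add: ac_simps)
qed

lemma set_integral_Ioc_eq_integral_Icc:
  fixes h :: "real \<Rightarrow> 'a::euclidean_space"
  assumes "set_integrable lborel {a<..b} h"
  shows "h integrable_on {a..b}" "(LINT x:{a<..b}|lborel. h x) = integral {a..b} h"
proof -
  have ioo: "set_integrable lborel {a<..<b} h"
    by (rule set_integrable_subset[OF assms]) auto
  then show "h integrable_on {a..b}"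
    using set_borel_integral_eq_integral(1) integrable_on_Icc_iff_Ioo by blast
  have "(LINT x:{a<..b}|lborel. h x) = (LINT x:{a<..<b}|lborel. h x)"
  proof (rule set_integral_cong_set)
    show "set_borel_measurable lborel {a<..<b} h" "set_borel_measurable lborel {a<..b} h"
      using ioo assms unfolding set_integrable_def set_borel_measurable_def by simp_all
    show "AE x in lborel. x \<in> {a<..<b} \<longleftrightarrow> x \<in> {a<..b}"
      using AE_lborel_singleton[of b] by eventually_elim auto
  qed
  then show "(LINT x:{a<..b}|lborel. h x) = integral {a..b} h"
    using set_borel_integral_eq_integral(2)[OF ioo] integral_open_interval_real[of a b h] by simp
qed

lemma tendsto_integral_Icc_at_top:
  fixes h :: "real \<Rightarrow> 'a::euclidean_space"
  assumes "set_integrable lborel {0<..} h"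
  shows "((\<lambda>b. integral {0..b} h) \<longlongrightarrow> (LINT x:{0<..}|lborel. h x)) at_top"
proof -
  have "((\<lambda>b. \<integral>x. indicator {..b} x *\<^sub>R (indicator {0<..} x *\<^sub>R h x) \<partial>lborel)
      \<longlongrightarrow> (LINT x:{0<..}|lborel. h x)) at_top"
    unfolding set_lebesgue_integral_def
    by (rule tendsto_integral_at_top) (use assms in \<open>simp_all add: set_integrable_def\<close>)
  moreover have "\<forall>\<^sub>F b in at_top. (\<integral>x. indicator {..b} x *\<^sub>R (indicator {0<..} x *\<^sub>R h x) \<partial>lborel)
      = integral {0..b} h"
    using eventually_gt_at_top[of 0]
  proof eventually_elim
    case (elim b)
    have "(\<integral>x. indicator {..b} x *\<^sub>R (indicator {0<..} x *\<^sub>R h x) \<partial>lborel) = (LINT x:{0<..b}|lborel. h x)"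
      unfolding set_lebesgue_integral_def
      by (rule Bochner_Integration.integral_cong) (auto split: split_indicator)
    also have "\<dots> = integral {0..b} h"
      using assms by (intro set_integral_Ioc_eq_integral_Icc set_integrable_subset[OF assms]) auto
    finally show ?case .
  qed
  ultimately show ?thesis
    by (rule tendsto_cong[THEN iffD1, rotated])
qed

definition laguerre_form :: "nat \<Rightarrow> real \<Rightarrow> complex poly \<Rightarrow> complex" where
  "laguerre_form k c p = (LINT x:{0<..}|lborel. poly p (of_real x) * of_real (x ^ k * exp (- c * x)))"

lemma set_integrable_laguerre:
  fixes p :: "complex poly"
  assumes "c > 0"
  shows "set_integrable lborel {0<..} (\<lambda>x. poly p (of_real x) * of_real (x ^ k * exp (- c * x)))"
proof -
  define B where "B = (\<Sum>i\<le>degree p. norm (coeff p i))"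
  define g where "g x = B * ((1 + x) ^ (degree p + k) * exp (- c * x))" for x
  have g: "set_integrable lborel {0<..} g"
    unfolding g_def using assms by (intro set_integrable_mult_right set_integrable_poly_exp)
  show ?thesis
  proof (rule set_integrable_bound[OF g])
    show "set_borel_measurable lborel {0<..} (\<lambda>x. poly p (of_real x) * of_real (x ^ k * exp (- c * x)))"
      unfolding set_borel_measurable_def by measurable
    have "norm (poly p (of_real x) * of_real (x ^ k * exp (- c * x))) \<le> norm (g x)" if "x > 0" for x
    proof -
      have "x ^ k \<le> (1 + x) ^ k"
        using that by (intro power_mono) auto
      then have "norm (complex_of_real (x ^ k * exp (- c * x))) \<le> (1 + x) ^ k * exp (- c * x)"
        unfolding norm_of_real using that by (auto simp: abs_mult intro!: mult_right_mono)
      then have "norm (poly p (of_real x) * of_real (x ^ k * exp (- c * x)))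
          \<le> B * (1 + x) ^ degree p * ((1 + x) ^ k * exp (- c * x))"
        unfolding norm_mult B_def using norm_poly_le[of x p] that
        by (intro mult_mono) (auto intro!: mult_nonneg_nonneg sum_nonneg)
      also have "\<dots> \<le> norm (g x)"
        by (simp add: g_def power_add ac_simps)
      finally show ?thesis .
    qed
    then show "AE x in lborel. x \<in> {0<..} \<longrightarrow>
        norm (poly p (of_real x) * of_real (x ^ k * exp (- c * x))) \<le> norm (g x)"
      by auto
  qed
qed

lemma laguerre_form_sum:
  assumes "c > 0" "finite S"
  shows "laguerre_form k c (\<Sum>i\<in>S. smult (a i) (p i)) = (\<Sum>i\<in>S. a i * laguerre_form k c (p i))"
  using assms(2)
proof (induction S rule: finite_induct)
  case empty
  then show ?case
    by (simp add: laguerre_form_def)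
next
  case (insert i S)
  have "laguerre_form k c (smult (a i) (p i) + (\<Sum>i\<in>S. smult (a i) (p i)))
      = (LINT x:{0<..}|lborel. a i * (poly (p i) (of_real x) * of_real (x ^ k * exp (- c * x)))
          + poly (\<Sum>i\<in>S. smult (a i) (p i)) (of_real x) * of_real (x ^ k * exp (- c * x)))"
    unfolding laguerre_form_def by (simp add: algebra_simps)
  also have "\<dots> = a i * laguerre_form k c (p i) + laguerre_form k c (\<Sum>i\<in>S. smult (a i) (p i))"
    unfolding laguerre_form_def using set_integrable_laguerre[OF assms(1)]
    by (simp add: set_integral_add set_integrable_mult_right)
  finally show ?case
    using insert by simp
qed

lemma laguerre_form_cnj_eq_0_imp:
  assumes "c > 0" "laguerre_form k c (q * map_poly cnj q) = 0"
  shows "q = 0"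
proof (rule ccontr)
  assume "q \<noteq> 0"
  define h where "h x = (norm (poly q (of_real x)))\<^sup>2 * (x ^ k * exp (- c * x))" for x
  have h_eq: "poly (q * map_poly cnj q) (of_real x) * of_real (x ^ k * exp (- c * x)) = of_real (h x)" for x
    by (simp add: h_def mult.assoc flip: complex_norm_square)
  have "set_integrable lborel {0<..} (\<lambda>x. complex_of_real (h x))"
    using set_integrable_laguerre[OF assms(1), of "q * map_poly cnj q" k] unfolding h_eq .
  then have h_int: "set_integrable lborel {0<..} h"
  proof (rule set_integrable_bound)
    show "set_borel_measurable lborel {0<..} h"
      unfolding set_borel_measurable_def h_def by measurable
  qed simp
  have "complex_of_real (LINT x:{0<..}|lborel. h x) = laguerre_form k c (q * map_poly cnj q)"
    unfolding laguerre_form_def h_eq by (rule set_integral_complex_of_real[symmetric])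
  then have "(\<integral>x. indicator {0<..} x * h x \<partial>lborel) = 0"
    using assms(2) by (simp add: set_lebesgue_integral_def)
  then have "AE x in lborel. indicator {0<..} x * h x = 0"
    using h_int
    by (subst (asm) integral_nonneg_eq_0_iff_AE) (auto simp: set_integrable_def h_def split: split_indicator)
  moreover have "finite (complex_of_real -` {z. poly q z = 0})"
    using poly_roots_finite[OF \<open>q \<noteq> 0\<close>] by (rule finite_vimageI) (auto intro: injI)
  then have "AE x in lborel. x \<notin> complex_of_real -` {z. poly q z = 0}"
    by (intro AE_not_in countable_imp_null_set_lborel countable_finite)
  ultimately have "AE x in lborel. x \<notin> {0<..1::real}"
    by eventually_elim (auto simp: h_def)
  then have "{0<..1::real} \<in> null_sets lborel"
    by (subst AE_iff_null_sets) auto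
  from null_setsD1[OF this] show False
    by simp
qed

definition skew_potential :: "nat \<Rightarrow> nat \<Rightarrow> complex \<Rightarrow> complex poly \<Rightarrow> real \<Rightarrow> complex" where
  "skew_potential N M t g x = (LINT y:{0<..}|lborel. of_real (eps (x - y)) * wpoly N M t g y)"

lemma borel_measurable_skew_potential [measurable]: "skew_potential N M t g \<in> borel_measurable borel"
proof -
  have "(\<lambda>x. \<integral>y. indicator {0<..} y *\<^sub>R (of_real (eps (x - y)) * wpoly N M t g y) \<partial>lborel)
      \<in> borel_measurable borel"
    unfolding eps_def by measurable
  then show ?thesis
    unfolding skew_potential_def[abs_def] set_lebesgue_integral_def .
qed

context
  fixes N M :: nat and t :: complex
  assumes MN: "M > N"
begin

lemma set_integrable_eps_wpoly: "set_integrable lborel {0<..} (\<lambda>y. of_real (eps (x - y)) * wpoly N M t g y)"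
proof (rule set_integrable_bound[OF set_integrable_wpoly[OF MN, of t g]])
  show "set_borel_measurable lborel {0<..} (\<lambda>y. of_real (eps (x - y)) * wpoly N M t g y)"
    unfolding set_borel_measurable_def eps_def by measurable
qed (auto simp: norm_mult eps_def sgn_real_def mult_left_le)

lemma skew_potential_eq:
  assumes "x \<ge> 0"
  shows "skew_potential N M t g x
    = integral {0..x} (wpoly N M t g) - (LINT y:{0<..}|lborel. wpoly N M t g y) / 2"
proof -
  let ?F = "wpoly N M t g"
  have F: "set_integrable lborel {0<..} ?F"
    by (rule set_integrable_wpoly[OF MN])
  have Ioc: "set_integrable lborel {0<..x} ?F"
    by (rule set_integrable_subset[OF F]) auto
  moreover have "(\<lambda>y. indicator {0<..} y *\<^sub>R (indicator {0<..x} y *\<^sub>R ?F y)) = (\<lambda>y. indicator {0<..x} y *\<^sub>R ?F y)"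
    by (auto simp: fun_eq_iff split: split_indicator)
  ultimately have ind: "set_integrable lborel {0<..} (\<lambda>y. indicator {0<..x} y *\<^sub>R ?F y)"
    by (simp add: set_integrable_def)
  have "skew_potential N M t g x = (LINT y:{0<..}|lborel. indicator {0<..x} y *\<^sub>R ?F y - ?F y / 2)"
    unfolding skew_potential_def
  proof (rule set_lebesgue_integral_cong_AE)
    show "AE y\<in>{0<..} in lborel. of_real (eps (x - y)) * ?F y = indicator {0<..x} y *\<^sub>R ?F y - ?F y / 2"
      using AE_lborel_singleton[of x] by eventually_elim (auto simp: eps_def split: split_indicator)
  qed (auto simp: eps_def)
  also have "\<dots> = (LINT y:{0<..}|lborel. indicator {0<..x} y *\<^sub>R ?F y) - (LINT y:{0<..}|lborel. ?F y) / 2"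
    using ind F by (simp add: set_integral_diff set_integral_divide_zero set_integrable_divide)
  also have "(LINT y:{0<..}|lborel. indicator {0<..x} y *\<^sub>R ?F y) = (LINT y:{0<..x}|lborel. ?F y)"
    unfolding set_lebesgue_integral_def
    by (rule Bochner_Integration.integral_cong) (auto split: split_indicator)
  also have "\<dots> = integral {0..x} ?F"
    by (rule set_integral_Ioc_eq_integral_Icc[OF Ioc])
  finally show ?thesis .
qed

lemma norm_skew_potential_le:
  "norm (skew_potential N M t g x) \<le> (LINT y:{0<..}|lborel. norm (wpoly N M t g y))"
proof -
  have "norm (skew_potential N M t g x) \<le> (LINT y:{0<..}|lborel. norm (of_real (eps (x - y)) * wpoly N M t g y))"
    unfolding skew_potential_def by (rule set_integral_norm_bound[OF set_integrable_eps_wpoly])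
  also have "\<dots> \<le> (LINT y:{0<..}|lborel. norm (wpoly N M t g y))"
    using set_integrable_norm[OF set_integrable_eps_wpoly] set_integrable_norm[OF set_integrable_wpoly[OF MN]]
    by (rule set_integral_mono) (auto simp: norm_mult eps_def sgn_real_def mult_left_le)
  finally show ?thesis .
qed

lemma skew1_eq_integral_skew_potential:
  "skew1 N M t f g = (LINT x:{0<..}|lborel. wpoly N M t f x * skew_potential N M t g x)"
  unfolding skew1_def skew_potential_def
proof (rule set_lebesgue_integral_cong, simp, intro allI impI)
  fix x :: real
  have "(LINT y:{0<..}|lborel. of_real (eps (x - y)) * poly f (of_real x) * poly g (of_real y)
          * weight N M t x * weight N M t y)
      = (LINT y:{0<..}|lborel. wpoly N M t f x * (of_real (eps (x - y)) * wpoly N M t g y))"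
    by (rule set_lebesgue_integral_cong) (auto simp: wpoly_def ac_simps)
  then show "(LINT y:{0<..}|lborel. of_real (eps (x - y)) * poly f (of_real x) * poly g (of_real y)
          * weight N M t x * weight N M t y)
      = wpoly N M t f x * (LINT y:{0<..}|lborel. of_real (eps (x - y)) * wpoly N M t g y)"
    by simp
qed

lemma set_integrable_wpoly_skew_potential:
  "set_integrable lborel {0<..} (\<lambda>x. wpoly N M t f x * skew_potential N M t g x)"
proof (rule set_integrable_bound)
  show "set_integrable lborel {0<..} (\<lambda>x. (LINT y:{0<..}|lborel. norm (wpoly N M t g y)) *\<^sub>R wpoly N M t f x)"
    using set_integrable_wpoly[OF MN] by (rule set_integrable_scaleR_right)
  show "set_borel_measurable lborel {0<..} (\<lambda>x. wpoly N M t f x * skew_potential N M t g x)"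
    unfolding set_borel_measurable_def by measurable
  show "AE x in lborel. x \<in> {0<..} \<longrightarrow> norm (wpoly N M t f x * skew_potential N M t g x)
      \<le> norm ((LINT y:{0<..}|lborel. norm (wpoly N M t g y)) *\<^sub>R wpoly N M t f x)"
  proof (intro AE_I2 impI)
    fix x
    have "norm (wpoly N M t f x) * norm (skew_potential N M t g x)
        \<le> norm (wpoly N M t f x) * (LINT y:{0<..}|lborel. norm (wpoly N M t g y))"
      by (intro mult_left_mono norm_skew_potential_le) simp
    moreover have "0 \<le> (LINT y:{0<..}|lborel. norm (wpoly N M t g y))"
      unfolding set_lebesgue_integral_def by (rule Bochner_Integration.integral_nonneg) simp
    ultimately show "norm (wpoly N M t f x * skew_potential N M t g x)
        \<le> norm ((LINT y:{0<..}|lborel. norm (wpoly N M t g y)) *\<^sub>R wpoly N M t f x)"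
      by (simp add: norm_mult mult.commute)
  qed
qed

lemma skew1_lincomb_left:
  "skew1 N M t (smult a f1 + smult b f2) g = a * skew1 N M t f1 g + b * skew1 N M t f2 g"
proof -
  have "skew1 N M t (smult a f1 + smult b f2) g = (LINT x:{0<..}|lborel.
      a * (wpoly N M t f1 x * skew_potential N M t g x) + b * (wpoly N M t f2 x * skew_potential N M t g x))"
    unfolding skew1_eq_integral_skew_potential
    by (rule set_lebesgue_integral_cong) (auto simp: wpoly_def algebra_simps)
  also have "\<dots> = a * skew1 N M t f1 g + b * skew1 N M t f2 g"
    unfolding skew1_eq_integral_skew_potential
    using set_integrable_wpoly_skew_potential[of f1 g] set_integrable_wpoly_skew_potential[of f2 g]
    by (simp add: set_integral_add set_integrable_mult_right)
  finally show ?thesis .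
qed

lemma integrable_on_wpoly_Icc: "wpoly N M t g integrable_on {0..b}"
  by (intro set_integral_Ioc_eq_integral_Icc(1) set_integrable_subset[OF set_integrable_wpoly[OF MN]]) auto

lemma continuous_on_skew_potential: "continuous_on {0..b} (skew_potential N M t g)"
proof -
  have "continuous_on {0..b}
      (\<lambda>x. integral {0..x} (wpoly N M t g) - (LINT y:{0<..}|lborel. wpoly N M t g y) / 2)"
    by (intro continuous_on_diff indefinite_integral_continuous_1 integrable_on_wpoly_Icc continuous_on_const)
  then show ?thesis
    by (rule continuous_on_cong[THEN iffD1, rotated 2]) (simp_all add: skew_potential_eq)
qed

lemma has_vector_derivative_skew_potential:
  assumes "x > 0" "of_real x \<noteq> t"
  shows "(skew_potential N M t g has_vector_derivative wpoly N M t g x) (at x)"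
proof -
  let ?F = "wpoly N M t g"
  have int: "x \<in> interior {0..x + 1}"
    using assms by simp
  have "continuous (at x within {0..x + 1} - {}) ?F"
    using isCont_wpoly[OF assms] by (rule continuous_at_imp_continuous_within)
  then have "((\<lambda>u. integral {0..u} ?F) has_vector_derivative ?F x) (at x within {0..x + 1} - {})"
    using assms by (intro integral_has_vector_derivative_continuous_at[OF integrable_on_wpoly_Icc]) auto
  then have "((\<lambda>u. integral {0..u} ?F) has_vector_derivative ?F x) (at x)"
    by (simp add: at_within_interior[OF int])
  then have "((\<lambda>u. integral {0..u} ?F - (LINT y:{0<..}|lborel. ?F y) / 2) has_vector_derivative ?F x - 0) (at x)"
    by (rule has_vector_derivative_diff[OF _ has_vector_derivative_const])
  then have "((\<lambda>u. integral {0..u} ?F - (LINT y:{0<..}|lborel. ?F y) / 2) has_vector_derivative ?F x) (at x)"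
    by simp
  then show ?thesis
    by (rule has_vector_derivative_transform_within_open[where S = "{0<..}"])
       (use assms in \<open>auto simp: skew_potential_eq\<close>)
qed

lemma integral_wpoly_Dop_skew_potential:
  assumes "b \<ge> 0"
  shows "integral {0..b} (\<lambda>x. wpoly N M t (Dop N M t q) x * skew_potential N M t g x)
    = wpoly N M t (q * pearson_sigma t) b * skew_potential N M t g b
      - integral {0..b} (\<lambda>x. poly (q * g) (of_real x) * of_real (x ^ (M - N) * exp (- real M * x)))"
proof -
  let ?F = "wpoly N M t g" and ?Q = "wpoly N M t (q * pearson_sigma t)" and ?P = "skew_potential N M t g"
  let ?\<rho> = "\<lambda>x. poly (q * g) (of_real x) * of_real (x ^ (M - N) * exp (- real M * x))"
  have FTC: "((\<lambda>x. wpoly N M t (Dop N M t q) x * ?P x + ?Q x * ?F x) has_integral ?Q b * ?P b - ?Q 0 * ?P 0) {0..b}"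
  proof (rule fundamental_theorem_of_calculus_interior_strong[of "{Re t}"])
    show "continuous_on {0..b} (\<lambda>y. ?Q y * ?P y)"
      by (intro continuous_on_mult continuous_on_wpoly_sigma[OF MN] continuous_on_skew_potential)
    fix x
    assume "x \<in> {0<..<b} - {Re t}"
    then have "x > 0" "of_real x \<noteq> t"
      by auto
    from has_vector_derivative_mult[OF has_vector_derivative_wpoly_sigma[OF this]
        has_vector_derivative_skew_potential[OF this]]
    show "((\<lambda>y. ?Q y * ?P y) has_vector_derivative wpoly N M t (Dop N M t q) x * ?P x + ?Q x * ?F x) (at x)"
      by (simp only: add.commute)
  qed (use assms in auto)
  have QF: "((\<lambda>x. ?Q x * ?F x) has_integral integral {0..b} ?\<rho>) {0..b}"
  proof (rule has_integral_spike_finite[of "{0, Re t}"])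
    have "continuous_on {0..b} ?\<rho>"
      by (intro continuous_intros)
    then show "(?\<rho> has_integral integral {0..b} ?\<rho>) {0..b}"
      using integrable_continuous_interval by blast
    fix x
    assume "x \<in> {0..b} - {0, Re t}"
    then have "x > 0" "of_real x \<noteq> t"
      by auto
    then show "?Q x * ?F x = ?\<rho> x"
      by (rule wpoly_sigma_mult_wpoly[OF MN])
  qed simp
  have "?Q 0 = 0"
    by (simp add: wpoly_def pearson_sigma_def)
  with has_integral_diff[OF FTC QF] show ?thesis
    by (simp add: integral_unique)
qed

lemma skew1_Dop_left: "skew1 N M t (Dop N M t q) g = - laguerre_form (M - N) (real M) (q * g)"
proof -
  let ?Q = "wpoly N M t (q * pearson_sigma t)" and ?P = "skew_potential N M t g"
  let ?\<rho> = "\<lambda>x. poly (q * g) (of_real x) * of_real (x ^ (M - N) * exp (- real M * x))"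
  have lim: "((\<lambda>b. integral {0..b} (\<lambda>x. wpoly N M t (Dop N M t q) x * ?P x)) \<longlongrightarrow> skew1 N M t (Dop N M t q) g) at_top"
    unfolding skew1_eq_integral_skew_potential
    by (intro tendsto_integral_Icc_at_top set_integrable_wpoly_skew_potential)
  have "((\<lambda>b. ?Q b * ?P b - integral {0..b} ?\<rho>) \<longlongrightarrow> 0 - laguerre_form (M - N) (real M) (q * g)) at_top"
  proof (intro tendsto_diff)
    show "((\<lambda>b. ?Q b * ?P b) \<longlongrightarrow> 0) at_top"
    proof (rule Lim_null_comparison)
      show "((\<lambda>b. norm (?Q b) * (LINT y:{0<..}|lborel. norm (wpoly N M t g y))) \<longlongrightarrow> 0) at_top"
        using tendsto_norm_zero[OF wpoly_sigma_tendsto_0_at_top[OF MN]] by (rule tendsto_mult_left_zero)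
      show "\<forall>\<^sub>F b in at_top. norm (?Q b * ?P b) \<le> norm (?Q b) * (LINT y:{0<..}|lborel. norm (wpoly N M t g y))"
        by (intro always_eventually allI) (simp add: norm_mult mult_left_mono norm_skew_potential_le)
    qed
    show "((\<lambda>b. integral {0..b} ?\<rho>) \<longlongrightarrow> laguerre_form (M - N) (real M) (q * g)) at_top"
      unfolding laguerre_form_def using MN by (intro tendsto_integral_Icc_at_top set_integrable_laguerre) auto
  qed
  moreover have "\<forall>\<^sub>F b in at_top. integral {0..b} (\<lambda>x. wpoly N M t (Dop N M t q) x * ?P x) = ?Q b * ?P b - integral {0..b} ?\<rho>"
    using eventually_ge_at_top[of 0] by eventually_elim (rule integral_wpoly_Dop_skew_potential)
  ultimately have "((\<lambda>b. integral {0..b} (\<lambda>x. wpoly N M t (Dop N M t q) x * ?P x))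
      \<longlongrightarrow> 0 - laguerre_form (M - N) (real M) (q * g)) at_top"
    by (rule tendsto_cong[THEN iffD2, rotated])
  from tendsto_unique[OF trivial_limit_at_top_linorder lim this] show ?thesis
    by simp
qed

end

lemma Dop_in_skew_orth_span_imp_0:
  assumes "M > N" "even N" "skew_orth N M t N pN" "skew_orth N M t (N + 1) pN1"
    and "Dop N M t q = smult a pN1 + smult b pN"
  shows "q = 0"
proof (rule ccontr)
  assume "q \<noteq> 0"
  have "degree pN = N" "degree pN1 = N + 1"
    using assms(3,4) by (simp_all add: skew_orth_def)
  then have "degree (Dop N M t q) \<le> N + 1"
    unfolding assms(5) by (intro degree_add_le order.trans[OF degree_smult_le]) auto
  then have deg_q: "degree q < N"
    using degree_Dop(1)[OF _ \<open>q \<noteq> 0\<close>] assms(1) by simp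
  have orth: "laguerre_form (M - N) (real M) (q * monom 1 i) = 0" if "i < N" for i
  proof -
    have "2 * (N div 2) = N" "2 * ((N + 1) div 2) = N"
      using assms(2) by auto
    then have "skew1 N M t pN (monom 1 i) = 0" "skew1 N M t pN1 (monom 1 i) = 0"
      using assms(3,4) that by (auto simp: skew_orth_def)
    then have "skew1 N M t (Dop N M t q) (monom 1 i) = 0"
      unfolding assms(5) skew1_lincomb_left[OF assms(1)] by simp
    then show ?thesis
      unfolding skew1_Dop_left[OF assms(1)] by simp
  qed
  have "map_poly cnj q = (\<Sum>i\<le>degree q. smult (cnj (coeff q i)) (monom 1 i))"
    using poly_as_sum_of_monoms[of "map_poly cnj q"] by (simp add: smult_monom degree_map_poly coeff_map_poly)
  then have "q * map_poly cnj q = (\<Sum>i\<le>degree q. smult (cnj (coeff q i)) (q * monom 1 i))"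
    by (simp add: sum_distrib_left mult_smult_right)
  then have "laguerre_form (M - N) (real M) (q * map_poly cnj q) = 0"
    using assms(1) deg_q by (simp add: laguerre_form_sum orth)
  then show False
    using laguerre_form_cnj_eq_0_imp[where c = "real M"] assms(1) \<open>q \<noteq> 0\<close> by auto
qed

theorem lemma3:
  fixes N M :: nat and t :: complex and pN pN1 :: "complex poly"
  assumes "N > 0" and "M > N" and "even N"
    and "skew_orth N M t N pN"
    and "skew_orth N M t (N + 1) pN1"
  shows "bij_betw (fmap N M t)
           {smult a pN1 + smult b pN | a b. True}
           {R :: complex poly. degree R \<le> 1}"
proof (rule bij_betw_span2_degree_le_1)
  have M: "M > 0"
    using assms(2) by simp
  show "fmap N M t (smult a P + smult b Q) = smult a (fmap N M t P) + smult b (fmap N M t Q)" for a b P Q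
    by (rule fmap_lincomb[OF M])
  show "degree (fmap N M t P) \<le> 1" for P
    by (rule fmap_decomposition(2)[OF M])
  fix a b
  assume "fmap N M t (smult a pN1 + smult b pN) = 0"
  then obtain q where q: "smult a pN1 + smult b pN = Dop N M t q"
    using fmap_eq_0_iff[OF M] by blast
  then have "smult a pN1 + smult b pN = 0"
    using Dop_in_skew_orth_span_imp_0[OF assms(2-5) q[symmetric]] by simp
  then have "coeff (smult a pN1 + smult b pN) (N + 1) = 0" "coeff (smult a pN1 + smult b pN) N = 0"
    by simp_all
  moreover have "degree pN = N" "coeff pN N = 1" "degree pN1 = N + 1" "coeff pN1 (N + 1) = 1"
    using assms(4,5) by (auto simp: skew_orth_def)
  ultimately show "a = 0 \<and> b = 0"
    by (simp add: coeff_eq_0)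
qed

end
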